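(* Let $n$ be even. For all $v_0,\dots,v_n\in\mathbb{R}^n$, $$P(v_0,\dots,v_n)=(-1)^{n/2}\,2^n\,\mathrm{Sm}(v_0,\dots,v_n).$$
   Context: $\mathrm{Or}(v_1,\dots,v_n)=\operatorname{sign}\det(v_1,\dots,v_n)$ (zero if not a basis). $P(v_0,\dots,v_n)=\prod_{i=0}^n\mathrm{Or}(v_0,\dots,\widehat{v_i},\dots,v_n)$. $S(v_0,\dots,v_n)=0$ if $0$ is not in the interior of the convex hull of $v_0,\dots,v_n$, and otherwise $S(v_0,\dots,v_n)=(-1)^i\mathrm{Or}(v_0,\dots,\widehat{v_i},\dots,v_n)$ for any $i$ (independent of $i$). $\mathrm{Sm}(v_0,\dots,v_n)=2^{-(n+1)}\sum_{\sigma_i\in\{\pm1\}}S(\sigma_0v_0,\dots,\sigma_nv_n)$. *)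

theory Defs
  imports "HOL-Analysis.Analysis" "HOL-Library.Numeral_Type"
begin

text \<open>Vectors live in real^'n; the index type 'n is linearly ordered, which
  fixes the identification of 'n with the coordinates 1..n (needed to speak of
  the sign of the determinant of an ordered list of n vectors).\<close>

definition coord_rank :: "'n::{finite,linorder} \<Rightarrow> nat" where
  "coord_rank k = card {j. j < k}"

text \<open>Or(w_1,...,w_n) = sign det(w_1,...,w_n); the matrix has the vectors as rows
  (same determinant as with columns). It is 0 exactly when the w_i are not a basis.\<close>
definition Or :: "(real^('n::{finite,linorder})) list \<Rightarrow> real" where
  "Or ws = sgn (det ((\<chi> k. ws ! coord_rank k) :: real^'n::{finite,linorder}^'n::{finite,linorder}))"

definition omit :: "(nat \<Rightarrow> 'a) \<Rightarrow> nat \<Rightarrow> nat \<Rightarrow> 'a list" where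
  "omit v m i = map v ([0..<i] @ [Suc i..<Suc m])"

definition Pfun :: "(nat \<Rightarrow> real^('n::{finite,linorder})) \<Rightarrow> real" where
  "Pfun v = (\<Prod>i\<in>{0..CARD('n)}. Or (omit v CARD('n) i))"

text \<open>S: 0 unless 0 is in the interior of the convex hull of v_0..v_n; otherwise
  (-1)^i Or(v_0,..,\<hat>v_i,..,v_n), here taken with i = 0.\<close>
definition Sfun :: "(nat \<Rightarrow> real^('n::{finite,linorder})) \<Rightarrow> real" where
  "Sfun v = (if 0 \<in> interior (convex hull (v ` {0..CARD('n)}))
             then Or (omit v CARD('n) 0) else 0)"

definition Sm :: "(nat \<Rightarrow> real^('n::{finite,linorder})) \<Rightarrow> real" where
  "Sm v = (1 / 2 ^ (CARD('n) + 1)) *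
     (\<Sum>\<sigma>\<in>({0..CARD('n)} \<rightarrow>\<^sub>E {-1, 1::real}). Sfun (\<lambda>i. \<sigma> i *\<^sub>R v i))"

end

theory Submission
  imports Defs
begin

text \<open>
  Write \<open>d\<^sub>i\<close> for the determinant of \<open>v\<^sub>0,\<dots>,v\<^sub>n\<close> with \<open>v\<^sub>i\<close> omitted, so that
  \<open>P(v) = \<Prod>\<^sub>i sgn d\<^sub>i\<close>.

  If some \<open>d\<^sub>i = 0\<close>, then also the corresponding minor of every re-signed family
  \<open>\<sigma>\<^sub>0v\<^sub>0,\<dots>,\<sigma>\<^sub>nv\<^sub>n\<close> vanishes; such a family lies in a closed half-space, so \<open>0\<close> is
  not interior to its hull and all terms of \<open>Sm(v)\<close> vanish, as does \<open>P(v)\<close>.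

  If all \<open>d\<^sub>i \<noteq> 0\<close>, Cramer's rule gives the linear relation \<open>\<Sum> (-1)\<^sup>i d\<^sub>i v\<^sub>i = 0\<close>,
  unique up to scaling.  The origin is interior to the hull of \<open>n+1\<close> points iff
  they satisfy a linear relation with positive coefficients; hence \<open>0\<close> is interior
  to the hull of \<open>\<sigma>\<^sub>iv\<^sub>i\<close> exactly for the two sign vectors \<open>\<sigma> = \<plusminus>(sgn ((-1)\<^sup>i d\<^sub>i d\<^sub>0))\<^sub>i\<close>.
  Evaluating \<open>S\<close> at these two and a parity count for even \<open>n\<close> yields the theorem.
\<close>

lemma coord_rank_strict_mono: "(k::'n::{finite,linorder}) < k' \<Longrightarrow> coord_rank k < coord_rank k'"
  unfolding coord_rank_def by (rule psubset_card_mono) auto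

lemma coord_rank_less_card: "coord_rank (k::'n::{finite,linorder}) < CARD('n)"
  unfolding coord_rank_def by (rule psubset_card_mono) auto

lemma inj_coord_rank: "inj (coord_rank :: 'n::{finite,linorder} \<Rightarrow> nat)"
  by (metis injI linorder_neqE coord_rank_strict_mono less_irrefl)

lemma bij_coord_rank: "bij_betw (coord_rank :: 'n::{finite,linorder} \<Rightarrow> nat) UNIV {..<CARD('n)}"
proof -
  have "coord_rank ` (UNIV::'n set) \<subseteq> {..<CARD('n)}"
    using coord_rank_less_card by auto
  moreover have "card (coord_rank ` (UNIV::'n set)) = CARD('n)"
    using inj_coord_rank card_image by blast
  ultimately show ?thesis
    using inj_coord_rank by (simp add: bij_betw_def card_subset_eq)
qed

definition coord_of_rank :: "nat \<Rightarrow> 'n::{finite,linorder}" where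
  "coord_of_rank s = inv coord_rank s"

lemma coord_of_rank_rank [simp]: "coord_of_rank (coord_rank k) = k"
  by (simp add: coord_of_rank_def inj_coord_rank)

lemma coord_rank_of_rank [simp]:
  "s < CARD('n::{finite,linorder}) \<Longrightarrow> coord_rank (coord_of_rank s :: 'n) = s"
  unfolding coord_of_rank_def using bij_coord_rank[where 'n='n]
  by (metis bij_betw_inv_into_right lessThan_iff)

lemma coord_rank_eq_iff:
  "s < CARD('n::{finite,linorder}) \<Longrightarrow> coord_rank (k::'n) = s \<longleftrightarrow> k = coord_of_rank s"
  by (metis coord_of_rank_rank coord_rank_of_rank)

lemma sum_coord_rank:
  "(\<Sum>k\<in>(UNIV::'n::{finite,linorder} set). g (coord_rank k)) = (\<Sum>s<CARD('n). g s)"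
  using sum.reindex_bij_betw[OF bij_coord_rank[where 'n='n], of g] by simp

lemma prod_coord_rank:
  "(\<Prod>k\<in>(UNIV::'n::{finite,linorder} set). g (coord_rank k)) = (\<Prod>s<CARD('n). g s)"
  using prod.reindex_bij_betw[OF bij_coord_rank[where 'n='n], of g] by simp

definition row_matrix :: "(nat \<Rightarrow> real^'n::{finite,linorder}) \<Rightarrow> real^'n::{finite,linorder}^'n::{finite,linorder}" where
  "row_matrix f = (\<chi> k. f (coord_rank k))"

definition skip :: "(nat \<Rightarrow> 'a) \<Rightarrow> nat \<Rightarrow> nat \<Rightarrow> 'a" where
  "skip v i s = v (if s < i then s else Suc s)"

definition minor :: "(nat \<Rightarrow> real^'n::{finite,linorder}) \<Rightarrow> nat \<Rightarrow> real" where
  "minor v i = det (row_matrix (skip v i))"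

lemma skip_0: "skip v 0 = (\<lambda>s. v (Suc s))"
  by (simp add: fun_eq_iff skip_def)

lemma nth_omit: "i \<le> m \<Longrightarrow> s < m \<Longrightarrow> omit v m i ! s = skip v i s"
proof (cases "s < i")
  case True
  then show ?thesis unfolding omit_def skip_def by (simp add: nth_append del: upt_Suc)
next
  case False
  assume "i \<le> m" "s < m"
  then have "[Suc i..<Suc m] ! (s - i) = Suc i + (s - i)"
    using False by (intro nth_upt) simp
  then show ?thesis
    using False \<open>s < m\<close> \<open>i \<le> m\<close> unfolding omit_def skip_def
    by (simp add: nth_append del: upt_Suc)
qed

lemma Or_omit: "i \<le> CARD('n) \<Longrightarrow>
    Or (omit (v :: nat \<Rightarrow> real^'n::{finite,linorder}) CARD('n) i) = sgn (minor v i)"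
  unfolding Or_def minor_def row_matrix_def by (simp add: nth_omit coord_rank_less_card)

lemma Pfun_eq: "Pfun (v :: nat \<Rightarrow> real^'n::{finite,linorder}) = (\<Prod>i\<in>{0..CARD('n)}. sgn (minor v i))"
  unfolding Pfun_def by (intro prod.cong) (auto simp: Or_omit)

lemma Sfun_eq: "Sfun (w :: nat \<Rightarrow> real^'n::{finite,linorder}) =
    (if 0 \<in> interior (convex hull (w ` {0..CARD('n)})) then sgn (minor w 0) else 0)"
  unfolding Sfun_def by (simp add: Or_omit)

lemma det_row_matrix_swap:
  fixes f :: "nat \<Rightarrow> real^'n::{finite,linorder}"
  assumes "a \<noteq> b" "a < CARD('n)" "b < CARD('n)"
  shows "det (row_matrix (f \<circ> Transposition.transpose a b)) = - det (row_matrix f)"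
proof -
  let ?p = "Transposition.transpose (coord_of_rank a :: 'n) (coord_of_rank b)"
  have ne: "coord_of_rank a \<noteq> (coord_of_rank b :: 'n)"
    using assms by (metis coord_rank_of_rank)
  have rank_p: "coord_rank (?p k) = Transposition.transpose a b (coord_rank k)" for k
    using assms coord_rank_eq_iff[of a k] coord_rank_eq_iff[of b k]
    unfolding transpose_def by auto
  have "row_matrix (f \<circ> Transposition.transpose a b) = (\<chi> k. row_matrix f $ ?p k)"
    unfolding row_matrix_def by (auto simp: vec_eq_iff rank_p)
  also have "det \<dots> = of_int (sign ?p) * det (row_matrix f)"
    by (rule det_permute_rows) (simp add: permutes_swap_id)
  finally show ?thesis using ne by (simp add: sign_swap_id)
qed

lemma det_row_matrix_repeat:
  fixes f :: "nat \<Rightarrow> real^'n::{finite,linorder}"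
  assumes "a \<noteq> b" "a < CARD('n)" "b < CARD('n)" "f a = f b"
  shows "det (row_matrix f) = 0"
proof -
  have "coord_of_rank a \<noteq> (coord_of_rank b :: 'n)"
    using assms by (metis coord_rank_of_rank)
  then show ?thesis
    by (rule det_identical_rows) (simp add: row_matrix_def row_def assms vec_eq_iff)
qed

lemma det_row_matrix_linear_first:
  fixes f :: "nat \<Rightarrow> real^'n::{finite,linorder}"
  assumes "finite S"
  shows "det (row_matrix (f(0 := (\<Sum>j\<in>S. a j *\<^sub>R u j))))
       = (\<Sum>j\<in>S. a j * det (row_matrix (f(0 := u j))))"
proof -
  let ?k = "coord_of_rank 0 :: 'n"
  have first_row: "row_matrix (f(0 := x)) = (\<chi> k. if k = ?k then x else f (coord_rank k))" for x
    unfolding row_matrix_def by (auto simp: vec_eq_iff coord_rank_eq_iff)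
  have "det (row_matrix (f(0 := (\<Sum>j\<in>S. a j *\<^sub>R u j))))
      = (\<Sum>j\<in>S. det (\<chi> k. if k = ?k then a j *s u j else f (coord_rank k)))"
    unfolding first_row
    using det_linear_row_sum[OF assms, of ?k "\<lambda>i j. a j *s u j" "\<lambda>k. f (coord_rank k)"]
    unfolding scalar_mult_eq_scaleR by simp
  also have "\<dots> = (\<Sum>j\<in>S. a j * det (row_matrix (f(0 := u j))))"
    unfolding first_row by (simp add: det_row_mul)
  finally show ?thesis .
qed

lemma minor_scaled:
  fixes v :: "nat \<Rightarrow> real^'n::{finite,linorder}"
  shows "minor (\<lambda>j. c j *\<^sub>R v j) i = (\<Prod>s<CARD('n). skip c i s) * minor v i"
proof -
  have "row_matrix (skip (\<lambda>j. c j *\<^sub>R v j) i)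
      = (\<chi> k. skip c i (coord_rank k) *s row_matrix (skip v i) $ k)"
    by (simp add: row_matrix_def skip_def vec_eq_iff scalar_mult_eq_scaleR)
  then show ?thesis
    unfolding minor_def
    using det_rows_mul[of "\<lambda>k. skip c i (coord_rank k)" "\<lambda>k. row_matrix (skip v i) $ k"]
    by (simp add: prod_coord_rank)
qed

lemma row_row_matrix [simp]: "row k (row_matrix f) = f (coord_rank k)"
  by (simp add: row_def row_matrix_def vec_eq_iff)

lemma row_matrix_independent:
  fixes f :: "nat \<Rightarrow> real^'n::{finite,linorder}"
  assumes "det (row_matrix f) \<noteq> 0" "(\<Sum>s<CARD('n). b s *\<^sub>R f s) = 0" "s < CARD('n)"
  shows "b s = 0"
proof -
  have "\<exists>B. row_matrix f ** B = mat 1"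
    using assms(1) invertible_det_nz invertible_right_inverse by blast
  then have indep: "\<forall>c. (\<Sum>k\<in>UNIV. c k *s row k (row_matrix f)) = 0 \<longrightarrow> (\<forall>k. c k = 0)"
    using matrix_right_invertible_independent_rows by blast
  have "(\<Sum>k\<in>UNIV. b (coord_rank k) *s row k (row_matrix f)) = 0"
    using assms(2) sum_coord_rank[where 'n='n, of "\<lambda>s. b s *\<^sub>R f s"]
    by (simp add: scalar_mult_eq_scaleR)
  from indep[rule_format, OF this] have "b (coord_rank (coord_of_rank s :: 'n)) = 0" .
  then show ?thesis using assms(3) by simp
qed

lemma row_matrix_spanning:
  fixes f :: "nat \<Rightarrow> real^'n::{finite,linorder}"
  assumes "det (row_matrix f) \<noteq> 0"
  shows "\<exists>b. y = (\<Sum>s<CARD('n). b s *\<^sub>R f s)"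
proof -
  let ?A = "row_matrix f"
  have "det (transpose ?A) \<noteq> 0" using assms by simp
  then obtain B :: "real^'n::{finite,linorder}^'n::{finite,linorder}" where B: "transpose ?A ** B = mat 1"
    using invertible_det_nz invertible_right_inverse by blast
  let ?x = "B *v y"
  have "transpose ?A *v ?x = y" by (simp add: matrix_vector_mul_assoc B)
  then have "y = (\<Sum>k\<in>UNIV. (?x $ k) *s row k ?A)"
    by (simp add: matrix_mult_sum)
  also have "\<dots> = (\<Sum>k\<in>UNIV. (\<lambda>s. (?x $ coord_of_rank s) *\<^sub>R f s) (coord_rank (k::'n)))"
    by (simp add: scalar_mult_eq_scaleR)
  also have "\<dots> = (\<Sum>s<CARD('n). (?x $ coord_of_rank s) *\<^sub>R f s)"
    by (rule sum_coord_rank)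
  finally show ?thesis by (intro exI[of _ "\<lambda>s. ?x $ coord_of_rank s"])
qed

section \<open>Cramer's relation among \<open>n+1\<close> vectors\<close>

definition front :: "(nat \<Rightarrow> 'a) \<Rightarrow> nat \<Rightarrow> nat \<Rightarrow> 'a" where
  "front v i = (skip v i)(0 := v i)"

text \<open>Moving \<open>v\<^sub>k\<^sub>+\<^sub>1\<close> to the front costs \<open>k\<close> transpositions.\<close>
lemma det_front:
  fixes v :: "nat \<Rightarrow> real^'n::{finite,linorder}"
  shows "Suc k \<le> CARD('n) \<Longrightarrow> det (row_matrix (front v (Suc k))) = (-1)^k * minor v 0"
proof (induction k)
  case 0
  have "front v (Suc 0) = skip v 0"
    unfolding front_def skip_def by (auto simp: fun_eq_iff)
  then show ?case by (simp add: minor_def)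
next
  case (Suc k)
  have "front v (Suc (Suc k)) \<circ> Transposition.transpose 0 (Suc k) = front v (Suc k)"
    unfolding front_def skip_def by (auto simp: fun_eq_iff Transposition.transpose_def)
  then have "det (row_matrix (front v (Suc k))) = - det (row_matrix (front v (Suc (Suc k))))"
    using Suc.prems det_row_matrix_swap[of 0 "Suc k" "front v (Suc (Suc k))"] by auto
  then show ?case using Suc by simp
qed

text \<open>If \<open>v\<^sub>0 = \<Sum>\<^sub>j a\<^sub>j v\<^sub>j\<close>, expanding the first row of \<open>d\<^sub>i\<close> leaves only the term \<open>j = i\<close>.\<close>
lemma minor_expand:
  fixes v :: "nat \<Rightarrow> real^'n::{finite,linorder}"
  assumes v0: "v 0 = (\<Sum>j\<in>{1..CARD('n)}. a j *\<^sub>R v j)" and i: "1 \<le> i" "i \<le> CARD('n)"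
  shows "minor v i = a i * det (row_matrix (front v i))"
proof -
  have skip_first: "skip v i = (skip v i)(0 := (\<Sum>j\<in>{1..CARD('n)}. a j *\<^sub>R v j))"
    using i v0 by (auto simp: fun_eq_iff skip_def)
  have others: "det (row_matrix ((skip v i)(0 := v j))) = 0" if "j \<in> {1..CARD('n)} - {i}" for j
    using that i by (intro det_row_matrix_repeat[of 0 "if j < i then j else j - 1"])
      (auto simp: skip_def)
  have "minor v i = (\<Sum>j\<in>{1..CARD('n)}. a j * det (row_matrix ((skip v i)(0 := v j))))"
    unfolding minor_def by (subst skip_first) (rule det_row_matrix_linear_first, simp)
  also have "\<dots> = a i * det (row_matrix ((skip v i)(0 := v i)))"
    using i others by (subst sum.remove[of _ i]) auto
  finally show ?thesis by (simp add: front_def)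
qed

lemma cramer_relation:
  fixes v :: "nat \<Rightarrow> real^'n::{finite,linorder}"
  assumes "minor v 0 \<noteq> 0"
  shows "(\<Sum>i\<in>{0..CARD('n)}. ((-1)^i * minor v i) *\<^sub>R v i) = 0"
proof -
  from row_matrix_spanning[of "\<lambda>s. v (Suc s)" "v 0"] assms
  obtain b where "v 0 = (\<Sum>s<CARD('n). b s *\<^sub>R v (Suc s))"
    by (auto simp: minor_def skip_0)
  then have v0: "v 0 = (\<Sum>j\<in>{1..CARD('n)}. b (j - 1) *\<^sub>R v j)"
    by (simp add: sum.atLeast1_atMost_eq)
  have minor_i: "((-1)^i * minor v i) *\<^sub>R v i = (- minor v 0) *\<^sub>R (b (i - 1) *\<^sub>R v i)"
    if i: "i \<in> {Suc 0..CARD('n)}" for i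
  proof -
    obtain k where k: "i = Suc k" "Suc k \<le> CARD('n)" using i by (cases i) auto
    then show ?thesis using minor_expand[OF v0, of i] det_front[of k v] by simp
  qed
  have "(\<Sum>i\<in>{0..CARD('n)}. ((-1)^i * minor v i) *\<^sub>R v i)
      = minor v 0 *\<^sub>R v 0 + (\<Sum>i\<in>{Suc 0..CARD('n)}. (- minor v 0) *\<^sub>R (b (i - 1) *\<^sub>R v i))"
    using minor_i by (simp add: sum.atLeast_Suc_atMost)
  also have "\<dots> = 0"
    using v0 by (simp add: scaleR_sum_right sum_negf)
  finally show ?thesis .
qed

text \<open>When \<open>d\<^sub>0 \<noteq> 0\<close> the linear relations among \<open>v\<^sub>0,\<dots>,v\<^sub>n\<close> form a line.\<close>
lemma linear_relation_unique:
  fixes w :: "nat \<Rightarrow> real^'n::{finite,linorder}"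
  assumes d0: "minor w 0 \<noteq> 0"
    and mu: "(\<Sum>i\<in>{0..CARD('n)}. mu i *\<^sub>R w i) = 0"
    and nu: "(\<Sum>i\<in>{0..CARD('n)}. nu i *\<^sub>R w i) = 0"
    and i: "i \<le> CARD('n)"
  shows "mu i * nu 0 = nu i * mu 0"
proof -
  define c where "c j = mu j * nu 0 - nu j * mu 0" for j
  have "(\<Sum>j\<in>{0..CARD('n)}. c j *\<^sub>R w j)
      = nu 0 *\<^sub>R (\<Sum>j\<in>{0..CARD('n)}. mu j *\<^sub>R w j) - mu 0 *\<^sub>R (\<Sum>j\<in>{0..CARD('n)}. nu j *\<^sub>R w j)"
    by (simp add: c_def scaleR_sum_right sum_subtractf scaleR_diff_left mult.commute)
  also have "\<dots> = 0" using mu nu by simp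
  finally have "(\<Sum>s<CARD('n). c (Suc s) *\<^sub>R w (Suc s)) = 0"
    by (simp add: c_def sum.atLeast_Suc_atMost sum.atLeast1_atMost_eq)
  moreover have "det (row_matrix (\<lambda>s. w (Suc s))) \<noteq> 0"
    using d0 by (simp add: minor_def skip_0)
  ultimately have "c (Suc s) = 0" if "s < CARD('n)" for s
    using row_matrix_independent[of "\<lambda>s. w (Suc s)" "\<lambda>s. c (Suc s)" s] that by simp
  then have "c i = 0"
    using i by (cases i) (auto simp: c_def)
  then show ?thesis by (simp add: c_def)
qed

section \<open>When is the origin interior to the hull of \<open>n+1\<close> points?\<close>

lemma interior_simplex:
  fixes S :: "'a::euclidean_space set"
  assumes "\<not> affine_dependent S" "card S = Suc DIM('a)"
  shows "interior (convex hull S)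
       = {y. \<exists>u. (\<forall>x\<in>S. 0 < u x) \<and> sum u S = 1 \<and> (\<Sum>x\<in>S. u x *\<^sub>R x) = y}"
  using interior_convex_hull_explicit_minimal[OF assms(1)] assms(2) by simp

text \<open>If some minor vanishes, all \<open>n+1\<close> points lie in a closed half-space through \<open>0\<close>.\<close>
lemma interior_hull_imp_minor_nonzero:
  fixes w :: "nat \<Rightarrow> real^'n::{finite,linorder}"
  assumes int: "0 \<in> interior (convex hull (w ` {0..CARD('n)}))" and i: "i \<le> CARD('n)"
  shows "minor w i \<noteq> 0"
proof
  assume "minor w i = 0"
  then have "\<not> (\<exists>B. B ** row_matrix (skip w i) = mat 1)"
    using invertible_det_nz invertible_left_inverse unfolding minor_def by blast
  then obtain y where y: "row_matrix (skip w i) *v y = 0" "y \<noteq> 0"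
    unfolding matrix_left_invertible_ker by blast
  have skip_orth: "skip w i s \<bullet> y = 0" if "s < CARD('n)" for s
  proof -
    have "(row_matrix (skip w i) *v y) $ coord_of_rank s = 0"
      using y by simp
    then show ?thesis
      using that by (simp add: matrix_vector_mul_component row_matrix_def)
  qed
  have orth: "w j \<bullet> y = 0" if "j \<le> CARD('n)" "j \<noteq> i" for j
  proof -
    let ?s = "if j < i then j else j - 1"
    have "?s < CARD('n)" "skip w i ?s = w j" using that i by (auto simp: skip_def)
    then show ?thesis using skip_orth by metis
  qed
  define z where "z = (if w i \<bullet> y \<ge> 0 then y else - y)"
  have z0: "z \<noteq> 0" using y(2) by (simp add: z_def)
  have "z \<bullet> w j \<ge> 0" if "j \<le> CARD('n)" for j
    using orth[of j] that by (cases "j = i") (auto simp: z_def inner_commute)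
  then have "w ` {0..CARD('n)} \<subseteq> {x. z \<bullet> x \<ge> 0}"
    by auto
  then have "convex hull (w ` {0..CARD('n)}) \<subseteq> {x. z \<bullet> x \<ge> 0}"
    by (intro hull_minimal convex_halfspace_ge)
  from interior_mono[OF this]
  have "interior (convex hull (w ` {0..CARD('n)})) \<subseteq> {x. z \<bullet> x > 0}"
    using z0 by simp
  then show False using int by auto
qed

lemma interior_hull_imp_positive_relation:
  fixes w :: "nat \<Rightarrow> real^'n::{finite,linorder}"
  assumes int: "0 \<in> interior (convex hull (w ` {0..CARD('n)}))"
  shows "\<exists>mu. (\<forall>i\<le>CARD('n). mu i > 0) \<and> (\<Sum>i\<in>{0..CARD('n)}. mu i *\<^sub>R w i) = 0"
proof -
  let ?S = "w ` {0..CARD('n)}"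
  have "\<not> card ?S \<le> DIM(real^'n::{finite,linorder})"
    using empty_interior_convex_hull[of ?S] int by auto
  moreover have "card ?S \<le> Suc CARD('n)"
    using card_image_le[of "{0..CARD('n)}" w] by simp
  ultimately have card_S: "card ?S = Suc DIM(real^'n::{finite,linorder})"
    by simp
  then have inj: "inj_on w {0..CARD('n)}"
    by (intro eq_card_imp_inj_on) auto
  have indep: "\<not> affine_dependent ?S"
    using interior_convex_hull_eq_empty[OF card_S] int by auto
  obtain u where u: "\<forall>x\<in>?S. 0 < u x" "(\<Sum>x\<in>?S. u x *\<^sub>R x) = 0"
    using int unfolding interior_simplex[OF indep card_S] by blast
  then show ?thesis
    by (intro exI[of _ "\<lambda>i. u (w i)"]) (auto simp: sum.reindex[OF inj])
qed

text \<open>With \<open>n \<ge> 2\<close>, nonvanishing minors force the points to be distinct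
  (two equal points would be repeated rows of some minor).\<close>
lemma nondegenerate_imp_inj:
  fixes w :: "nat \<Rightarrow> real^'n::{finite,linorder}"
  assumes n2: "2 \<le> CARD('n)" and nd: "\<forall>i\<le>CARD('n). minor w i \<noteq> 0"
  shows "inj_on w {0..CARD('n)}"
proof -
  have no_collision: False if ij: "i < j" "j \<le> CARD('n)" "w i = w j" for i j
  proof -
    define k where "k = (if 0 < i then 0 else if j = 1 then 2 else (1::nat))"
    have k: "k \<le> CARD('n)" "k \<noteq> i" "k \<noteq> j" using ij n2 by (auto simp: k_def)
    have "minor w k = 0"
      unfolding minor_def using k ij
      by (intro det_row_matrix_repeat[of "if i < k then i else i - 1" "if j < k then j else j - 1"])
        (auto simp: skip_def)
    then show False using nd k by auto
  qed
  show ?thesis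
  proof (rule inj_onI)
    fix i j assume "i \<in> {0..CARD('n)}" "j \<in> {0..CARD('n)}" "w i = w j"
    then show "i = j"
      using no_collision[of i j] no_collision[of j i] by (cases i j rule: linorder_cases) auto
  qed
qed

text \<open>Conversely, if the minors do not vanish, a strictly positive relation puts the
  origin into the interior: the points are then affinely independent, and the
  interior of a simplex consists of its strictly positive convex combinations.\<close>
lemma positive_relation_imp_interior_hull:
  fixes w :: "nat \<Rightarrow> real^'n::{finite,linorder}"
  assumes n2: "2 \<le> CARD('n)" and nd: "\<forall>i\<le>CARD('n). minor w i \<noteq> 0"
    and mu_pos: "\<forall>i\<le>CARD('n). mu i > 0" and mu: "(\<Sum>i\<in>{0..CARD('n)}. mu i *\<^sub>R w i) = 0"
  shows "0 \<in> interior (convex hull (w ` {0..CARD('n)}))"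
proof -
  let ?S = "w ` {0..CARD('n)}"
  let ?m = "\<Sum>i\<in>{0..CARD('n)}. mu i"
  have inj: "inj_on w {0..CARD('n)}"
    using nondegenerate_imp_inj[OF n2 nd] .
  have card_S: "card ?S = Suc DIM(real^'n::{finite,linorder})"
    using card_image[OF inj] by simp
  have m_pos: "?m > 0"
    using mu_pos by (intro sum_pos) auto
  have indep: "\<not> affine_dependent ?S"
  proof
    assume "affine_dependent ?S"
    then obtain U where U: "sum U ?S = 0" "\<exists>x\<in>?S. U x \<noteq> 0" "(\<Sum>x\<in>?S. U x *\<^sub>R x) = 0"
      using affine_dependent_explicit_finite[of ?S] by auto
    have U_sum: "(\<Sum>j\<in>{0..CARD('n)}. U (w j)) = 0"
      and U_rel: "(\<Sum>j\<in>{0..CARD('n)}. U (w j) *\<^sub>R w j) = 0"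
      using U(1,3) by (simp_all add: sum.reindex[OF inj])
    have proportional: "U (w j) * mu 0 = mu j * U (w 0)" if "j \<le> CARD('n)" for j
      using linear_relation_unique[OF _ U_rel mu that] nd by simp
    have "0 = (\<Sum>j\<in>{0..CARD('n)}. U (w j) * mu 0)"
      using U_sum by (simp add: sum_distrib_right[symmetric])
    also have "\<dots> = ?m * U (w 0)"
      using proportional by (simp add: sum_distrib_right)
    finally have "U (w 0) = 0" using m_pos by simp
    then have "U (w j) = 0" if "j \<le> CARD('n)" for j
      using proportional[OF that] mu_pos that by auto
    then show False using U(2) by auto
  qed
  have "\<exists>u. (\<forall>x\<in>?S. 0 < u x) \<and> sum u ?S = 1 \<and> (\<Sum>x\<in>?S. u x *\<^sub>R x) = 0"
  proof (intro exI conjI)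
    let ?u = "\<lambda>x. mu (the_inv_into {0..CARD('n)} w x) / ?m"
    have u_w: "?u (w j) = mu j / ?m" if "j \<in> {0..CARD('n)}" for j
      using that inj by (simp add: the_inv_into_f_f)
    show "\<forall>x\<in>?S. 0 < ?u x"
      using u_w mu_pos m_pos by auto
    have "sum ?u ?S = (\<Sum>j\<in>{0..CARD('n)}. mu j / ?m)"
      using u_w by (rule sum.reindex_cong[OF inj refl])
    then show "sum ?u ?S = 1"
      using m_pos by (simp add: sum_divide_distrib[symmetric])
    have "(\<Sum>x\<in>?S. ?u x *\<^sub>R x) = (\<Sum>j\<in>{0..CARD('n)}. (1 / ?m) *\<^sub>R (mu j *\<^sub>R w j))"
      by (rule sum.reindex_cong[OF inj refl]) (simp add: u_w)
    also have "\<dots> = (1 / ?m) *\<^sub>R (\<Sum>j\<in>{0..CARD('n)}. mu j *\<^sub>R w j)"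
      by (simp add: scaleR_sum_right)
    also have "\<dots> = 0"
      using mu by simp
    finally show "(\<Sum>x\<in>?S. ?u x *\<^sub>R x) = 0" .
  qed
  then show ?thesis
    unfolding interior_simplex[OF indep card_S] by simp
qed

lemma sgn_prod: "sgn (prod f A) = (\<Prod>x\<in>A. sgn (f x :: 'a::linordered_idom))"
  by (induction A rule: infinite_finite_induct) (auto simp: sgn_mult)

lemma Sfun_scaled_degenerate:
  fixes v :: "nat \<Rightarrow> real^'n::{finite,linorder}"
  assumes "i \<le> CARD('n)" "minor v i = 0"
  shows "Sfun (\<lambda>j. c j *\<^sub>R v j) = 0"
  using interior_hull_imp_minor_nonzero[of "\<lambda>j. c j *\<^sub>R v j" i] assms
  by (auto simp: Sfun_eq minor_scaled)

lemma Sfun_scaled_interior: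
  fixes v :: "nat \<Rightarrow> real^'n::{finite,linorder}"
  assumes "0 \<in> interior (convex hull ((\<lambda>j. c j *\<^sub>R v j) ` {0..CARD('n)}))"
  shows "Sfun (\<lambda>j. c j *\<^sub>R v j) = (\<Prod>s<CARD('n). sgn (c (Suc s))) * sgn (minor v 0)"
  using assms by (simp add: Sfun_eq minor_scaled skip_0 sgn_mult sgn_prod)

lemma minor_scaled_nonzero:
  fixes v :: "nat \<Rightarrow> real^'n::{finite,linorder}"
  assumes "\<forall>j\<le>CARD('n). c j \<noteq> 0" "i \<le> CARD('n)" "minor v i \<noteq> 0"
  shows "minor (\<lambda>j. c j *\<^sub>R v j) i \<noteq> 0"
  using assms by (auto simp: minor_scaled skip_def)

text \<open>The coefficients of Cramer's relation, rescaled by \<open>d\<^sub>0\<close> so that they are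
  defined without division: \<open>\<lambda>\<^sub>i = (-1)\<^sup>i d\<^sub>i d\<^sub>0\<close>, so \<open>\<lambda>\<^sub>0 = d\<^sub>0\<^sup>2\<close>.\<close>
definition cramer_coeff :: "(nat \<Rightarrow> real^'n::{finite,linorder}) \<Rightarrow> nat \<Rightarrow> real" where
  "cramer_coeff v i = (-1)^i * minor v i * minor v 0"

lemma cramer_coeff_relation:
  fixes v :: "nat \<Rightarrow> real^'n::{finite,linorder}"
  shows "(\<Sum>i\<in>{0..CARD('n)}. cramer_coeff v i *\<^sub>R v i) = 0"
proof (cases "minor v 0 = 0")
  case False
  have "(\<Sum>i\<in>{0..CARD('n)}. cramer_coeff v i *\<^sub>R v i)
      = minor v 0 *\<^sub>R (\<Sum>i\<in>{0..CARD('n)}. ((-1)^i * minor v i) *\<^sub>R v i)"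
    by (simp add: cramer_coeff_def scaleR_sum_right mult.commute)
  then show ?thesis using cramer_relation[OF False] by simp
qed (simp add: cramer_coeff_def)

lemma sgn_cramer_coeff_0:
  "minor v 0 \<noteq> 0 \<Longrightarrow> sgn (cramer_coeff v 0) = 1"
  by (simp add: cramer_coeff_def sgn_mult)

lemma sgn_cramer_coeff_sign:
  "minor v 0 \<noteq> 0 \<Longrightarrow> minor v i \<noteq> 0 \<Longrightarrow> sgn (cramer_coeff v i) \<in> {-1, 1}"
  by (auto simp: cramer_coeff_def sgn_mult sgn_if)

text \<open>Positive relations among the
  \<open>\<sigma>\<^sub>iv\<^sub>i\<close> are exactly re-signed multiples of Cramer's relation.\<close>
lemma interior_signed_hull_iff:
  fixes v :: "nat \<Rightarrow> real^'n::{finite,linorder}"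
  assumes n2: "2 \<le> CARD('n)" and nd: "\<forall>i\<le>CARD('n). minor v i \<noteq> 0"
    and \<sigma>: "\<forall>i\<le>CARD('n). \<sigma> i \<in> {-1, 1}"
  shows "0 \<in> interior (convex hull ((\<lambda>i. \<sigma> i *\<^sub>R v i) ` {0..CARD('n)}))
     \<longleftrightarrow> (\<forall>i\<le>CARD('n). \<sigma> i = \<sigma> 0 * sgn (cramer_coeff v i))"
    (is "0 \<in> interior (convex hull (?w ` _)) \<longleftrightarrow> _")
proof
  assume "0 \<in> interior (convex hull (?w ` {0..CARD('n)}))"
  then obtain mu where mu_pos: "\<forall>i\<le>CARD('n). mu i > 0"
    and "(\<Sum>i\<in>{0..CARD('n)}. mu i *\<^sub>R ?w i) = 0"
    using interior_hull_imp_positive_relation by blast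
  then have rel: "(\<Sum>i\<in>{0..CARD('n)}. (mu i * \<sigma> i) *\<^sub>R v i) = 0"
    by simp
  have coeff0: "sgn (cramer_coeff v 0) = 1"
    using nd by (simp add: sgn_cramer_coeff_0)
  show "\<forall>i\<le>CARD('n). \<sigma> i = \<sigma> 0 * sgn (cramer_coeff v i)"
  proof (intro allI impI)
    fix i assume i: "i \<le> CARD('n)"
    have "(mu i * \<sigma> i) * cramer_coeff v 0 = cramer_coeff v i * (mu 0 * \<sigma> 0)"
      using linear_relation_unique[OF _ rel cramer_coeff_relation i] nd by simp
    from arg_cong[OF this, of sgn]
    have "sgn (mu i) * sgn (\<sigma> i) * sgn (cramer_coeff v 0)
        = sgn (cramer_coeff v i) * (sgn (mu 0) * sgn (\<sigma> 0))"
      by (simp only: sgn_mult)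
    moreover have "sgn (\<sigma> i) = \<sigma> i" "sgn (\<sigma> 0) = \<sigma> 0"
      using \<sigma> i by auto
    ultimately show "\<sigma> i = \<sigma> 0 * sgn (cramer_coeff v i)"
      using mu_pos i coeff0 by simp
  qed
next
  assume signs: "\<forall>i\<le>CARD('n). \<sigma> i = \<sigma> 0 * sgn (cramer_coeff v i)"
  have coeff_nonzero: "cramer_coeff v i \<noteq> 0" if "i \<le> CARD('n)" for i
    using nd that by (simp add: cramer_coeff_def)
  have nd_w: "\<forall>i\<le>CARD('n). minor ?w i \<noteq> 0"
  proof -
    have "\<forall>j\<le>CARD('n). \<sigma> j \<noteq> 0" using \<sigma> by auto
    then show ?thesis using nd minor_scaled_nonzero[of \<sigma>] by blast
  qed
  have "(\<Sum>i\<in>{0..CARD('n)}. \<bar>cramer_coeff v i\<bar> *\<^sub>R ?w i)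
      = (\<Sum>i\<in>{0..CARD('n)}. \<sigma> 0 *\<^sub>R (cramer_coeff v i *\<^sub>R v i))"
  proof (rule sum.cong[OF refl])
    fix i assume "i \<in> {0..CARD('n)}"
    then have "\<sigma> i = \<sigma> 0 * sgn (cramer_coeff v i)"
      by (intro signs[rule_format]) simp
    then have "\<bar>cramer_coeff v i\<bar> * \<sigma> i = \<sigma> 0 * (\<bar>cramer_coeff v i\<bar> * sgn (cramer_coeff v i))"
      by (simp only: mult.left_commute)
    then show "\<bar>cramer_coeff v i\<bar> *\<^sub>R ?w i = \<sigma> 0 *\<^sub>R (cramer_coeff v i *\<^sub>R v i)"
      by (simp add: abs_mult_sgn)
  qed
  also have "\<dots> = 0"
    unfolding scaleR_sum_right[symmetric] cramer_coeff_relation by simp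
  finally show "0 \<in> interior (convex hull (?w ` {0..CARD('n)}))"
    using coeff_nonzero by (intro positive_relation_imp_interior_hull[OF n2 nd_w]) auto
qed

definition cramer_signs :: "(nat \<Rightarrow> real^'n::{finite,linorder}) \<Rightarrow> real \<Rightarrow> nat \<Rightarrow> real" where
  "cramer_signs v e = restrict (\<lambda>i. e * sgn (cramer_coeff v i)) {0..CARD('n)}"

lemma cramer_signs_0: "minor v 0 \<noteq> 0 \<Longrightarrow> cramer_signs v e 0 = e"
  by (simp add: cramer_signs_def sgn_cramer_coeff_0)

lemma cramer_signs_sign_vector:
  fixes v :: "nat \<Rightarrow> real^'n::{finite,linorder}"
  assumes nd: "\<forall>i\<le>CARD('n). minor v i \<noteq> 0" and e: "e \<in> {-1, 1}"
  shows "cramer_signs v e \<in> {0..CARD('n)} \<rightarrow>\<^sub>E {-1, 1}"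
proof -
  have "e * sgn (cramer_coeff v i) \<in> {-1, 1}" if "i \<le> CARD('n)" for i
    using e sgn_cramer_coeff_sign[of v i] nd that by auto
  then show ?thesis by (auto simp: cramer_signs_def)
qed

lemma interior_signed_hull_iff_cramer_signs:
  fixes v :: "nat \<Rightarrow> real^'n::{finite,linorder}"
  assumes n2: "2 \<le> CARD('n)" and nd: "\<forall>i\<le>CARD('n). minor v i \<noteq> 0"
    and \<sigma>: "\<sigma> \<in> {0..CARD('n)} \<rightarrow>\<^sub>E {-1, 1}"
  shows "0 \<in> interior (convex hull ((\<lambda>i. \<sigma> i *\<^sub>R v i) ` {0..CARD('n)}))
     \<longleftrightarrow> \<sigma> \<in> cramer_signs v ` {-1, 1}"
proof -
  let ?c = "\<lambda>i. sgn (cramer_coeff v i)"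
  have "\<forall>i\<le>CARD('n). \<sigma> i \<in> {-1, 1}"
    using \<sigma> by auto
  then have "0 \<in> interior (convex hull ((\<lambda>i. \<sigma> i *\<^sub>R v i) ` {0..CARD('n)}))
      \<longleftrightarrow> (\<forall>i\<le>CARD('n). \<sigma> i = \<sigma> 0 * ?c i)"
    by (rule interior_signed_hull_iff[OF n2 nd])
  also have "\<dots> \<longleftrightarrow> \<sigma> = cramer_signs v (\<sigma> 0)"
  proof
    assume all: "\<forall>i\<le>CARD('n). \<sigma> i = \<sigma> 0 * ?c i"
    show "\<sigma> = cramer_signs v (\<sigma> 0)"
    proof
      fix i
      show "\<sigma> i = cramer_signs v (\<sigma> 0) i"
        using all[rule_format, of i] PiE_arb[OF \<sigma>, of i]
        by (cases "i \<le> CARD('n)") (simp_all add: cramer_signs_def)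
    qed
  next
    assume eq: "\<sigma> = cramer_signs v (\<sigma> 0)"
    show "\<forall>i\<le>CARD('n). \<sigma> i = \<sigma> 0 * ?c i"
    proof (intro allI impI)
      fix i assume "i \<le> CARD('n)"
      then have "cramer_signs v (\<sigma> 0) i = \<sigma> 0 * ?c i"
        by (simp add: cramer_signs_def)
      then show "\<sigma> i = \<sigma> 0 * ?c i"
        using fun_cong[OF eq, of i] by (rule trans[rotated])
    qed
  qed
  also have "\<dots> \<longleftrightarrow> \<sigma> \<in> cramer_signs v ` {-1, 1}"
  proof
    assume "\<sigma> = cramer_signs v (\<sigma> 0)"
    moreover have "\<sigma> 0 \<in> {-1, 1}"
      using \<sigma> by auto
    ultimately show "\<sigma> \<in> cramer_signs v ` {-1, 1}"
      by (rule image_eqI)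
  qed (use nd in \<open>auto simp: cramer_signs_0\<close>)
  finally show ?thesis .
qed

lemma Sfun_cramer_signs:
  fixes v :: "nat \<Rightarrow> real^'n::{finite,linorder}"
  assumes n2: "2 \<le> CARD('n)" and nd: "\<forall>i\<le>CARD('n). minor v i \<noteq> 0" and e: "e \<in> {-1, 1}"
  shows "Sfun (\<lambda>i. cramer_signs v e i *\<^sub>R v i)
       = e ^ CARD('n) * (\<Prod>s<CARD('n). sgn (cramer_coeff v (Suc s))) * sgn (minor v 0)"
proof -
  have "0 \<in> interior (convex hull ((\<lambda>i. cramer_signs v e i *\<^sub>R v i) ` {0..CARD('n)}))"
    using interior_signed_hull_iff_cramer_signs[OF n2 nd cramer_signs_sign_vector[OF nd e]] e
    by blast
  then have "Sfun (\<lambda>i. cramer_signs v e i *\<^sub>R v i)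
      = (\<Prod>s<CARD('n). sgn (cramer_signs v e (Suc s))) * sgn (minor v 0)"
    by (rule Sfun_scaled_interior)
  also have "(\<Prod>s<CARD('n). sgn (cramer_signs v e (Suc s)))
      = (\<Prod>s<CARD('n). e * sgn (cramer_coeff v (Suc s)))"
    using e by (intro prod.cong) (auto simp: cramer_signs_def sgn_mult)
  also have "\<dots> = e ^ CARD('n) * (\<Prod>s<CARD('n). sgn (cramer_coeff v (Suc s)))"
    by (simp add: prod.distrib)
  finally show ?thesis .
qed

lemma sum_Sfun_signs:
  fixes v :: "nat \<Rightarrow> real^'n::{finite,linorder}"
  assumes n2: "2 \<le> CARD('n)" and nd: "\<forall>i\<le>CARD('n). minor v i \<noteq> 0"
  shows "(\<Sum>\<sigma>\<in>{0..CARD('n)} \<rightarrow>\<^sub>E {-1, 1::real}. Sfun (\<lambda>i. \<sigma> i *\<^sub>R v i))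
       = (1 + (-1)^CARD('n)) * (\<Prod>s<CARD('n). sgn (cramer_coeff v (Suc s))) * sgn (minor v 0)"
proof -
  let ?P = "{0..CARD('n)} \<rightarrow>\<^sub>E {-1, 1::real}"
  have "(\<Sum>\<sigma>\<in>?P. Sfun (\<lambda>i. \<sigma> i *\<^sub>R v i))
      = (\<Sum>\<sigma>\<in>cramer_signs v ` {-1, 1}. Sfun (\<lambda>i. \<sigma> i *\<^sub>R v i))"
  proof (rule sum.mono_neutral_right)
    show "finite ?P" by (simp add: finite_PiE)
    show "cramer_signs v ` {-1, 1} \<subseteq> ?P"
      using cramer_signs_sign_vector[OF nd] by blast
    show "\<forall>\<sigma>\<in>?P - cramer_signs v ` {-1, 1}. Sfun (\<lambda>i. \<sigma> i *\<^sub>R v i) = 0"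
      using interior_signed_hull_iff_cramer_signs[OF n2 nd] by (auto simp: Sfun_eq)
  qed
  also have "\<dots> = (\<Sum>e\<in>{-1, 1}. Sfun (\<lambda>i. cramer_signs v e i *\<^sub>R v i))"
  proof (rule sum.reindex[unfolded comp_def])
    have "minor v 0 \<noteq> 0" using nd by simp
    then show "inj_on (cramer_signs v) {-1, 1}"
      by (intro inj_onI) (metis cramer_signs_0)
  qed
  also have "\<dots> = (1 + (-1)^CARD('n)) * (\<Prod>s<CARD('n). sgn (cramer_coeff v (Suc s))) * sgn (minor v 0)"
    by (simp add: Sfun_cramer_signs[OF n2 nd] algebra_simps)
  finally show ?thesis .
qed

text \<open>\<open>\<Prod>\<^sub>s\<^sub>=\<^sub>1\<^sup>2\<^sup>m (-1)\<^sup>s = (-1)\<^sup>m\<close>: the parity count that produces the factor \<open>(-1)\<^sup>n\<^sup>/\<^sup>2\<close>.\<close>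
lemma prod_alternating_sign: "(\<Prod>s<2 * m. (-1::'a::comm_ring_1) ^ Suc s) = (-1) ^ m"
proof (induction m)
  case (Suc m)
  have "(\<Prod>s<2 * Suc m. (-1::'a) ^ Suc s)
      = (\<Prod>s<2 * m. (-1::'a) ^ Suc s) * ((-1) ^ Suc (2 * m) * (-1) ^ Suc (Suc (2 * m)))"
    by (simp add: mult.assoc)
  then show ?case using Suc by simp
qed simp

lemma cramer_sign_product:
  fixes v :: "nat \<Rightarrow> real^'n::{finite,linorder}"
  assumes d0: "minor v 0 \<noteq> 0" and even: "even CARD('n)"
  shows "(\<Prod>s<CARD('n). sgn (cramer_coeff v (Suc s))) * sgn (minor v 0)
       = (-1) ^ (CARD('n) div 2) * Pfun v"
proof -
  let ?d = "sgn (minor v 0)"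
  have sgn_coeff: "sgn (cramer_coeff v (Suc s)) = ((-1) ^ Suc s * sgn (minor v (Suc s))) * ?d" for s
    by (simp add: cramer_coeff_def sgn_mult)
  have "?d ^ CARD('n) = 1"
    using d0 even by (auto simp: sgn_if elim!: evenE)
  then have "(\<Prod>s<CARD('n). sgn (cramer_coeff v (Suc s)))
      = (\<Prod>s<CARD('n). (-1::real) ^ Suc s) * (\<Prod>s<CARD('n). sgn (minor v (Suc s)))"
    unfolding sgn_coeff prod.distrib prod_constant card_lessThan by simp
  also have "(\<Prod>s<CARD('n). (-1::real) ^ Suc s) = (-1) ^ (CARD('n) div 2)"
    using even prod_alternating_sign[of "CARD('n) div 2"] by simp
  also have "(\<Prod>s<CARD('n). sgn (minor v (Suc s))) * ?d = Pfun v"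
    by (simp add: Pfun_eq prod.atLeast_Suc_atMost prod.atLeast1_atMost_eq mult.commute)
  ultimately show ?thesis
    by (metis mult.assoc)
qed

theorem corollary8p3:
  fixes v :: "nat \<Rightarrow> real^('n::{finite,linorder})"
  assumes "even CARD('n)"
  shows "Pfun v = (-1) ^ (CARD('n) div 2) * 2 ^ CARD('n) * Sm v"
proof (cases "\<forall>i\<le>CARD('n). minor v i \<noteq> 0")
  case True
  have "2 \<le> CARD('n)"
    using assms by (metis dvd_imp_le zero_less_card_finite)
  then have "Sm v = 1 / 2 ^ (CARD('n) + 1) * (2 * ((-1) ^ (CARD('n) div 2) * Pfun v))"
    unfolding Sm_def sum_Sfun_signs[OF \<open>2 \<le> CARD('n)\<close> True]
    using cramer_sign_product[of v] True assms by (simp add: mult.assoc)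
  then show ?thesis
    by (simp add: power_mult_distrib[symmetric])
next
  case False
  then obtain i where i: "i \<le> CARD('n)" "minor v i = 0" by auto
  then have "Pfun v = 0"
    unfolding Pfun_eq by (intro prod_zero) (auto intro!: bexI[of _ i])
  moreover have "Sm v = 0"
    unfolding Sm_def using Sfun_scaled_degenerate[OF i] by simp
  ultimately show ?thesis by simp
qed

end
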